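(* Let $n \geq 2$, $Q \geq 1$, $0<\mu_0 \leq (4\pi)^{-n}$ and $0<c_4<1$. Then the set \[ \bigcup_{\substack{4\mu_0 Q \leq q \leq 4Q \\ q \equiv 0 \ (\mathrm{mod}\ 4)}} \ \bigcup_{\substack{2 \leq a_2,\ldots,a_n \leq 2q \\ a_j \equiv 0\ (\mathrm{mod}\ 2)}} \Big\{ y' = (y_2,\ldots,y_n) \in [0,2\pi]^{n-1} : \Big| y_j - \frac{2\pi a_j}{q} \Big| < \frac{\pi c_4}{(\mu_0 Q)\, Q^{1/(n-1)}},\ j=2,\ldots,n \Big\} \] (the unions over integers $q$ and integer tuples $(a_2,\dots,a_n)$) has Lebesgue measure at least $c_4^{\,n-1} 3^{-(n-1)} 2^{-n}$. *)

theory Defs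
  imports "HOL-Analysis.Analysis"
begin

end

theory Submission
  imports Defs
begin

text \<open>Put \<open>d = n - 1\<close> and \<open>K = \<lfloor>Q\<^bsup>1/d\<^esup>\<rfloor>\<close>. By Dirichlet's simultaneous
  approximation every point of \<open>[pi, 2 pi]\<^sup>d\<close> lies in an open cube of half-side \<open>pi / (p K)\<close>
  around a point \<open>pi b / p\<close> with \<open>1 \<le> p \<le> Q\<close> and \<open>p \<le> b\<^sub>j \<le> 2 p\<close>. The cubes with
  \<open>p < \<mu>\<^sub>0 Q\<close> are few and cover measure at most \<open>\<mu>\<^sub>0 (8 pi)\<^sup>d \<le> 2\<^sup>d / 2\<close>, so those with
  \<open>p \<ge> \<mu>\<^sub>0 Q\<close> cover measure at least \<open>2\<^sup>d / 2\<close>. A Vitali subfamily of the latter is disjoint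
  and has total volume at least \<open>3\<^sup>-\<^sup>d\<close> times that, and each of its cubes contains a box of
  side \<open>c\<^sub>4 pi / (2 p K)\<close> lying in the set, because \<open>pi b / p = 2 pi (2 b) / (4 p)\<close>.\<close>

definition cube :: "real^'m \<Rightarrow> real \<Rightarrow> (real^'m) set" where
  "cube c r = {y. \<forall>j. \<bar>y$j - c$j\<bar> < r}"

lemma cube_eq_box: "cube c r = box (c - (\<chi> j. r)) (c + (\<chi> j. r))"
  unfolding cube_def by (auto simp: mem_box_cart abs_less_iff algebra_simps)

lemma lmeasurable_cube [iff]: "cube c r \<in> lmeasurable"
  unfolding cube_eq_box by (rule lmeasurable_box)

lemma measure_box_cart_const:
  fixes a b :: "real^'m"
  assumes side: "\<And>j. b$j - a$j = L" and "0 \<le> L"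
  shows "measure lebesgue (box a b) = L ^ CARD('m)"
proof -
  have basis: "(b - a) \<bullet> i = L" if "i \<in> Basis" for i
    using that side by (auto simp: Basis_vec_def inner_axis)
  have "\<forall>i\<in>Basis. a \<bullet> i \<le> b \<bullet> i"
    using basis \<open>0 \<le> L\<close> by (metis diff_ge_0_iff_ge inner_diff_left)
  then have "measure lebesgue (box a b) = (\<Prod>i\<in>Basis. (b - a) \<bullet> i)"
    by (simp add: measure_lborel_box_eq)
  also have "\<dots> = (\<Prod>i\<in>(Basis::(real^'m) set). L)"
    using basis by (rule prod.cong[OF refl])
  finally show ?thesis by simp
qed

lemma measure_cube:
  assumes "0 \<le> r"
  shows "measure lebesgue (cube (c::real^'m) r) = (2 * r) ^ CARD('m)"
  unfolding cube_eq_box using assms by (intro measure_box_cart_const) auto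

lemma cube_subset_tripled_cube:
  assumes "w \<in> cube c r" "w \<in> cube c' r'" "r \<le> r'"
  shows "cube c r \<subseteq> cube c' (3 * r')"
proof
  fix y assume y: "y \<in> cube c r"
  have "\<bar>y$j - c'$j\<bar> < 3 * r'" for j
  proof -
    have "\<bar>y$j - c$j\<bar> < r" "\<bar>w$j - c$j\<bar> < r" "\<bar>w$j - c'$j\<bar> < r'"
      using y assms by (auto simp: cube_def)
    then show ?thesis using assms by linarith
  qed
  then show "y \<in> cube c' (3 * r')" by (simp add: cube_def)
qed

text \<open>Greedy selection: the largest cube goes in, every cube meeting it lies in its triple.\<close>

lemma vitali_covering_cubes:
  fixes c :: "'i \<Rightarrow> real^'m" and R :: "'i \<Rightarrow> real"
  assumes "finite I" "\<forall>i\<in>I. R i > 0"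
  shows "\<exists>J\<subseteq>I. pairwise (\<lambda>i j. disjnt (cube (c i) (R i)) (cube (c j) (R j))) J \<and>
           (\<Union>i\<in>I. cube (c i) (R i)) \<subseteq> (\<Union>j\<in>J. cube (c j) (3 * R j))"
  using assms
proof (induction "card I" arbitrary: I rule: less_induct)
  case less
  show ?case
  proof (cases "I = {}")
    case True then show ?thesis by auto
  next
    case False
    have "Max (R ` I) \<in> R ` I" using False less.prems by simp
    then obtain i0 where i0: "i0 \<in> I" "R i0 = Max (R ` I)" by (metis imageE)
    have R_le: "R i \<le> R i0" if "i \<in> I" for i
      using i0 that less.prems by simp
    define I' where "I' = {i\<in>I. disjnt (cube (c i) (R i)) (cube (c i0) (R i0))}"
    have "c i0 \<in> cube (c i0) (R i0)" using i0 less.prems by (auto simp: cube_def)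
    then have "I' \<subset> I" using i0(1) by (auto simp: I'_def disjnt_def)
    then have "card I' < card I" using less.prems by (simp add: psubset_card_mono)
    then obtain J' where J': "J' \<subseteq> I'"
        "pairwise (\<lambda>i j. disjnt (cube (c i) (R i)) (cube (c j) (R j))) J'"
        "(\<Union>i\<in>I'. cube (c i) (R i)) \<subseteq> (\<Union>j\<in>J'. cube (c j) (3 * R j))"
      using less.hyps[of I'] less.prems \<open>I' \<subset> I\<close> by (meson finite_subset psubset_imp_subset subset_iff)
    have tripled: "cube (c i) (R i) \<subseteq> cube (c i0) (3 * R i0)" if i: "i \<in> I - I'" for i
    proof -
      obtain w where "w \<in> cube (c i) (R i)" "w \<in> cube (c i0) (R i0)"
        using i by (auto simp: I'_def disjnt_def)
      then show ?thesis using R_le i by (intro cube_subset_tripled_cube) auto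
    qed
    have "(\<Union>i\<in>I. cube (c i) (R i)) \<subseteq> (\<Union>j\<in>insert i0 J'. cube (c j) (3 * R j))"
    proof (rule UN_least)
      fix i assume "i \<in> I"
      then show "cube (c i) (R i) \<subseteq> (\<Union>j\<in>insert i0 J'. cube (c j) (3 * R j))"
        using J'(3) tripled[of i] by (cases "i \<in> I'") auto
    qed
    moreover have "pairwise (\<lambda>i j. disjnt (cube (c i) (R i)) (cube (c j) (R j))) (insert i0 J')"
      using J'(1,2) by (auto simp: pairwise_insert I'_def disjnt_sym)
    moreover have "insert i0 J' \<subseteq> I" using J'(1) i0 by (auto simp: I'_def)
    ultimately show ?thesis by blast
  qed
qed

lemma measure_UN_cubes_le_disjoint_subfamily:
  fixes c :: "'i \<Rightarrow> real^'m" and R :: "'i \<Rightarrow> real"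
  assumes "finite I" "\<forall>i\<in>I. R i > 0"
  obtains J where "J \<subseteq> I" "pairwise (\<lambda>i j. disjnt (cube (c i) (R i)) (cube (c j) (R j))) J"
    "measure lebesgue (\<Union>i\<in>I. cube (c i) (R i)) \<le> 6 ^ CARD('m) * (\<Sum>j\<in>J. R j ^ CARD('m))"
proof -
  obtain J where J: "J \<subseteq> I" "pairwise (\<lambda>i j. disjnt (cube (c i) (R i)) (cube (c j) (R j))) J"
      "(\<Union>i\<in>I. cube (c i) (R i)) \<subseteq> (\<Union>j\<in>J. cube (c j) (3 * R j))"
    using vitali_covering_cubes[OF assms] by blast
  have "finite J" using J(1) assms(1) by (rule finite_subset)
  have "(\<Union>i\<in>I. cube (c i) (R i)) \<in> sets lebesgue"
    using assms(1) by (intro fmeasurableD fmeasurable.finite_UN) auto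
  moreover have "(\<Union>j\<in>J. cube (c j) (3 * R j)) \<in> lmeasurable"
    using \<open>finite J\<close> by (intro fmeasurable.finite_UN) auto
  ultimately have "measure lebesgue (\<Union>i\<in>I. cube (c i) (R i))
                     \<le> measure lebesgue (\<Union>j\<in>J. cube (c j) (3 * R j))"
    using J(3) by (intro measure_mono_fmeasurable)
  also have "\<dots> \<le> (\<Sum>j\<in>J. measure lebesgue (cube (c j) (3 * R j)))"
    using \<open>finite J\<close> by (intro measure_UNION_le fmeasurableD lmeasurable_cube)
  also have "\<dots> = (\<Sum>j\<in>J. 6 ^ CARD('m) * R j ^ CARD('m))"
  proof (intro sum.cong refl)
    fix j assume "j \<in> J"
    then have "0 \<le> R j" using J(1) assms(2) by (auto intro: less_imp_le)
    then have "measure lebesgue (cube (c j) (3 * R j)) = (6 * R j) ^ CARD('m)"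
      by (simp add: measure_cube)
    then show "measure lebesgue (cube (c j) (3 * R j)) = 6 ^ CARD('m) * R j ^ CARD('m)"
      by (simp only: power_mult_distrib)
  qed
  finally show ?thesis
    by (intro that[OF J(1,2)]) (simp add: sum_distrib_left)
qed

lemma emeasure_ge_of_lower_boxes:
  fixes c :: "'i \<Rightarrow> real^'m" and R :: "'i \<Rightarrow> real"
  assumes "finite I" and R_pos: "\<forall>i\<in>I. R i > 0" and "0 \<le> t" "t \<le> 1"
    and boxes: "\<forall>i\<in>I. box (c i - (\<chi> j. t * R i)) (c i) \<subseteq> S" and "S \<in> sets lebesgue"
  shows "ennreal ((t / 6) ^ CARD('m) * measure lebesgue (\<Union>i\<in>I. cube (c i) (R i)))
           \<le> emeasure lebesgue S"
proof -
  define T where "T i = box (c i - (\<chi> j. t * R i)) (c i)" for i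
  obtain J where J: "J \<subseteq> I" "pairwise (\<lambda>i j. disjnt (cube (c i) (R i)) (cube (c j) (R j))) J"
    and le: "measure lebesgue (\<Union>i\<in>I. cube (c i) (R i)) \<le> 6 ^ CARD('m) * (\<Sum>j\<in>J. R j ^ CARD('m))"
    using measure_UN_cubes_le_disjoint_subfamily[OF assms(1) R_pos] by blast
  have "finite J" using J(1) assms(1) by (rule finite_subset)
  have R_nonneg: "0 \<le> R j" if "j \<in> J" for j using that J(1) R_pos by (auto intro: less_imp_le)
  have T_sub: "T j \<subseteq> cube (c j) (R j)" if "j \<in> J" for j
  proof
    fix y assume "y \<in> T j"
    then have y: "c j $ i - t * R j < y $ i \<and> y $ i < c j $ i" for i
      by (simp add: T_def mem_box_cart)
    have "t * R j \<le> R j"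
      using R_nonneg[OF that] \<open>0 \<le> t\<close> \<open>t \<le> 1\<close> by (rule mult_left_le_one_le)
    then have "\<bar>y $ i - c j $ i\<bar> < R j" for i
      using y[of i] by linarith
    then show "y \<in> cube (c j) (R j)" by (simp add: cube_def)
  qed
  have "pairwise (\<lambda>i j. disjnt (T i) (T j)) J"
    using J(2) T_sub unfolding pairwise_def by (meson disjnt_subset1 disjnt_subset2)
  then have "measure lebesgue (\<Union>j\<in>J. T j) = (\<Sum>j\<in>J. measure lebesgue (T j))"
    using \<open>finite J\<close> by (intro measure_UNION') (auto simp: T_def)
  also have "\<dots> = (\<Sum>j\<in>J. t ^ CARD('m) * R j ^ CARD('m))"
  proof (intro sum.cong refl)
    fix j assume "j \<in> J"
    then show "measure lebesgue (T j) = t ^ CARD('m) * R j ^ CARD('m)"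
      unfolding T_def power_mult_distrib[symmetric]
      using R_nonneg \<open>0 \<le> t\<close> by (intro measure_box_cart_const) auto
  qed
  also have "\<dots> = (t / 6) ^ CARD('m) * (6 ^ CARD('m) * (\<Sum>j\<in>J. R j ^ CARD('m)))"
    by (simp add: sum_distrib_left power_divide)
  finally have "(t / 6) ^ CARD('m) * measure lebesgue (\<Union>i\<in>I. cube (c i) (R i))
                  \<le> measure lebesgue (\<Union>j\<in>J. T j)"
    using le \<open>0 \<le> t\<close> by (simp add: mult_left_mono)
  also have "\<dots> = emeasure lebesgue (\<Union>j\<in>J. T j)"
    using \<open>finite J\<close> by (intro emeasure_eq_measure2[symmetric] fmeasurable.finite_UN) (auto simp: T_def)
  also have "\<dots> \<le> emeasure lebesgue S"
    using boxes J(1) \<open>S \<in> sets lebesgue\<close> by (intro emeasure_mono) (auto simp: T_def)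
  finally show ?thesis by (simp add: ennreal_leI)
qed

lemma floor_scaled_frac_eq_imp_near_integer:
  fixes x y :: real and K :: nat
  assumes "K > 0" "\<lfloor>K * frac x\<rfloor> = \<lfloor>K * frac y\<rfloor>"
  shows "\<bar>(y - x) - of_int (\<lfloor>y\<rfloor> - \<lfloor>x\<rfloor>)\<bar> < 1 / K"
proof -
  have "\<bar>K * frac y - K * frac x\<bar> < 1" using assms(2) by linarith
  then have "K * \<bar>frac y - frac x\<bar> < 1" by (simp add: abs_mult right_diff_distrib[symmetric])
  then have "\<bar>frac y - frac x\<bar> < 1 / K" using assms(1) by (simp add: field_simps)
  then show ?thesis by (simp add: frac_def algebra_simps)
qed

text \<open>Pigeonhole on the cells of side \<open>1/K\<close> of the unit cube, with the \<open>N + 1\<close> points \<open>frac (p z)\<close>.\<close>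

lemma simultaneous_dirichlet_approximation:
  fixes z :: "real^'m" and K N :: nat
  assumes "K \<ge> 1" "K ^ CARD('m) \<le> N"
  obtains p :: nat and b :: "'m \<Rightarrow> int"
  where "1 \<le> p" "p \<le> N" "\<forall>j. \<bar>p * z$j - b j\<bar> < 1 / K"
proof -
  define cell where "cell p = (\<lambda>j. \<lfloor>K * frac (p * z$j)\<rfloor>)" for p :: nat
  have "cell p j \<in> {0..<int K}" for p j
  proof -
    have "K * frac (p * z$j) < K"
      using assms(1) frac_lt_1 by (simp add: mult_less_cancel_left1)
    then show ?thesis by (simp add: cell_def floor_less_iff)
  qed
  then have "cell ` {0..N} \<subseteq> PiE UNIV (\<lambda>_. {0..<int K})" by auto
  then have "card (cell ` {0..N}) \<le> card (PiE (UNIV :: 'm set) (\<lambda>_. {0..<int K}))"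
    by (intro card_mono) (simp_all add: finite_PiE)
  also have "\<dots> = K ^ CARD('m)" by (simp add: card_PiE)
  finally have "card (cell ` {0..N}) \<le> K ^ CARD('m)" .
  then have "\<not> inj_on cell {0..N}"
    using assms(2) card_image by fastforce
  then obtain p1 p2 where "p1 < p2" "p2 \<le> N" "cell p1 = cell p2"
    unfolding inj_on_def by (metis atLeastAtMost_iff linorder_neqE_nat)
  show ?thesis
  proof
    show "1 \<le> p2 - p1" "p2 - p1 \<le> N" using \<open>p1 < p2\<close> \<open>p2 \<le> N\<close> by auto
    show "\<forall>j. \<bar>real (p2 - p1) * z$j - of_int (\<lfloor>p2 * z$j\<rfloor> - \<lfloor>p1 * z$j\<rfloor>)\<bar> < 1 / K"
    proof
      fix j
      have "\<lfloor>K * frac (p1 * z$j)\<rfloor> = \<lfloor>K * frac (p2 * z$j)\<rfloor>"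
        using \<open>cell p1 = cell p2\<close> by (simp add: cell_def fun_eq_iff)
      then show "\<bar>real (p2 - p1) * z$j - of_int (\<lfloor>p2 * z$j\<rfloor> - \<lfloor>p1 * z$j\<rfloor>)\<bar> < 1 / K"
        using floor_scaled_frac_eq_imp_near_integer[of K] assms(1) \<open>p1 < p2\<close>
        by (simp add: of_nat_diff left_diff_distrib)
    qed
  qed
qed

definition rational_point :: "nat \<Rightarrow> ('m \<Rightarrow> int) \<Rightarrow> real^'m" where
  "rational_point p b = (\<chi> j. pi * b j / p)"

definition rational_cube :: "nat \<Rightarrow> nat \<Rightarrow> ('m \<Rightarrow> int) \<Rightarrow> (real^'m) set" where
  "rational_cube K p b = cube (rational_point p b) (pi / (p * K))"

definition numerators :: "nat \<Rightarrow> ('m::finite \<Rightarrow> int) set" where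
  "numerators p = PiE UNIV (\<lambda>_. {int p..2 * int p})"

lemma finite_numerators [simp]: "finite (numerators p)"
  by (simp add: numerators_def finite_PiE)

lemma card_numerators: "card (numerators p :: ('m::finite \<Rightarrow> int) set) = (p + 1) ^ CARD('m)"
  by (simp add: numerators_def card_PiE nat_add_distrib)

lemma box_subset_rational_cubes:
  assumes "K \<ge> 1" "K ^ CARD('m) \<le> N"
  shows "box (\<chi> j. pi) (\<chi> j. 2 * pi) \<subseteq> (\<Union>p\<in>{1..N}. \<Union>b\<in>numerators p. rational_cube K p b :: (real^'m) set)"
proof
  fix y :: "real^'m" assume "y \<in> box (\<chi> j. pi) (\<chi> j. 2 * pi)"
  then have y: "pi < y$j \<and> y$j < 2 * pi" for j by (simp add: mem_box_cart)
  obtain p and b :: "'m \<Rightarrow> int" where p: "1 \<le> p" "p \<le> N" and b: "\<forall>j. \<bar>p * (y$j / pi) - b j\<bar> < 1 / K"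
    using simultaneous_dirichlet_approximation[OF assms, of "\<chi> j. y$j / pi"] by auto
  have "b \<in> numerators p"
  proof -
    have "int p \<le> b j \<and> b j \<le> 2 * int p" for j
    proof -
      have "1 < y$j / pi" "y$j / pi < 2" using y[of j] by (simp_all add: field_simps)
      then have "real p * 1 \<le> p * (y$j / pi)" "p * (y$j / pi) \<le> real p * 2"
        by (intro mult_left_mono; simp)+
      moreover have "1 / K \<le> 1" using assms(1) by simp
      ultimately have "real_of_int (int p - 1) < b j" "b j < real_of_int (2 * int p + 1)"
        using b[rule_format, of j] by (auto simp: abs_less_iff)
      then show ?thesis by (simp only: of_int_less_iff) linarith
    qed
    then show ?thesis by (simp add: numerators_def PiE_UNIV_domain)
  qed
  moreover have "y \<in> rational_cube K p b"
  proof -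
    have "\<bar>y$j - pi * b j / p\<bar> < pi / (p * K)" for j
    proof -
      have "y$j - pi * b j / p = (pi / p) * (p * (y$j / pi) - b j)"
        using p(1) by (simp add: field_simps)
      then have "\<bar>y$j - pi * b j / p\<bar> = (pi / p) * \<bar>p * (y$j / pi) - b j\<bar>"
        by (simp add: abs_mult)
      also have "\<dots> < (pi / p) * (1 / K)"
        using p(1) b by (intro mult_strict_left_mono) auto
      finally show ?thesis by simp
    qed
    then show ?thesis by (simp add: rational_cube_def rational_point_def cube_def)
  qed
  ultimately show "y \<in> (\<Union>p\<in>{1..N}. \<Union>b\<in>numerators p. rational_cube K p b)"
    using p by auto
qed

lemma lmeasurable_rational_cubes:
  "finite P \<Longrightarrow> (\<Union>p\<in>P. \<Union>b\<in>numerators p. rational_cube K p b) \<in> lmeasurable"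
  by (intro fmeasurable.finite_UN) (auto simp: rational_cube_def)

lemma measure_rational_cubes_le:
  assumes "finite P" "0 \<notin> P" "K \<ge> 1"
  shows "measure lebesgue (\<Union>p\<in>P. \<Union>b\<in>numerators p. rational_cube K p b :: (real^'m) set)
           \<le> card P * (4 * pi / K) ^ CARD('m)"
proof -
  have "measure lebesgue (\<Union>p\<in>P. \<Union>b\<in>numerators p. rational_cube K p b :: (real^'m) set)
        \<le> (\<Sum>p\<in>P. measure lebesgue (\<Union>b\<in>numerators p. rational_cube K p b :: (real^'m) set))"
    using assms(1) by (intro measure_UNION_le fmeasurableD fmeasurable.finite_UN) (auto simp: rational_cube_def)
  also have "\<dots> \<le> (\<Sum>p\<in>P. (4 * pi / K) ^ CARD('m))"
  proof (rule sum_mono)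
    fix p assume "p \<in> P"
    then have "1 \<le> real p" using assms(2) by (cases p) auto
    have "measure lebesgue (\<Union>b\<in>numerators p. rational_cube K p b :: (real^'m) set)
          \<le> (\<Sum>b\<in>numerators p. measure lebesgue (rational_cube K p b :: (real^'m) set))"
      by (intro measure_UNION_le) (auto simp: rational_cube_def intro: fmeasurableD)
    also have "\<dots> = real ((p + 1) ^ CARD('m)) * (2 * pi / (p * K)) ^ CARD('m)"
      by (simp add: rational_cube_def measure_cube card_numerators)
    also have "\<dots> = ((p + 1) / p * (2 * pi / K)) ^ CARD('m)"
      by (simp add: power_mult_distrib[symmetric])
    also have "\<dots> \<le> (2 * (2 * pi / K)) ^ CARD('m)"
      using \<open>1 \<le> real p\<close> by (intro power_mono mult_right_mono) (auto simp: field_simps)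
    finally show "measure lebesgue (\<Union>b\<in>numerators p. rational_cube K p b :: (real^'m) set)
                    \<le> (4 * pi / K) ^ CARD('m)" by simp
  qed
  finally show ?thesis by simp
qed

lemma card_small_denominators_le:
  assumes "0 \<le> L"
  shows "real (card {p \<in> {1..N}. real p < L}) \<le> L"
proof -
  have "{p \<in> {1..N}. real p < L} \<subseteq> {1..nat \<lfloor>L\<rfloor>}"
    by (auto simp: le_nat_iff le_floor_iff)
  then have "card {p \<in> {1..N}. real p < L} \<le> nat \<lfloor>L\<rfloor>"
    using card_mono[of "{1..nat \<lfloor>L\<rfloor>}"] by fastforce
  then show ?thesis using assms by linarith
qed

lemma measure_large_denominator_cubes_ge:
  assumes "K \<ge> 1" "K ^ CARD('m) \<le> N" "0 \<le> L"
  shows "pi ^ CARD('m) - L * (4 * pi / K) ^ CARD('m)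
           \<le> measure lebesgue (\<Union>p\<in>{p\<in>{1..N}. L \<le> p}. \<Union>b\<in>numerators p. rational_cube K p b :: (real^'m) set)"
proof -
  let ?U = "\<lambda>P. \<Union>p\<in>P. \<Union>b\<in>numerators p. rational_cube K p b :: (real^'m) set"
  let ?large = "{p\<in>{1..N}. L \<le> p}" and ?small = "{p\<in>{1..N}. p < L}"
  have U_lmeasurable: "?U P \<in> lmeasurable" if "P \<subseteq> {1..N}" for P
    using finite_subset[OF that] by (intro lmeasurable_rational_cubes) auto
  have "pi ^ CARD('m) = measure lebesgue (box (\<chi> j. pi) (\<chi> j. 2 * pi) :: (real^'m) set)"
    by (rule sym, rule measure_box_cart_const) auto
  also have "\<dots> \<le> measure lebesgue (?U ?large \<union> ?U ?small)"
  proof (rule measure_mono_fmeasurable)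
    show "box (\<chi> j. pi) (\<chi> j. 2 * pi) \<subseteq> ?U ?large \<union> ?U ?small"
      using box_subset_rational_cubes[OF assms(1,2)] by force
    show "box (\<chi> j. pi) (\<chi> j. 2 * pi) \<in> sets lebesgue" by simp
    show "?U ?large \<union> ?U ?small \<in> lmeasurable" by (intro fmeasurable.Un U_lmeasurable) auto
  qed
  also have "\<dots> \<le> measure lebesgue (?U ?large) + measure lebesgue (?U ?small)"
    by (intro measure_Un_le fmeasurableD U_lmeasurable) auto
  also have "measure lebesgue (?U ?small) \<le> card ?small * (4 * pi / K) ^ CARD('m)"
    using assms(1) by (intro measure_rational_cubes_le) auto
  also have "\<dots> \<le> L * (4 * pi / K) ^ CARD('m)"
    using card_small_denominators_le[OF assms(3)] by (intro mult_right_mono) auto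
  finally show ?thesis by simp
qed

definition rational_nbhd :: "real \<Rightarrow> real \<Rightarrow> real \<Rightarrow> (real^'m) set" where
  "rational_nbhd \<mu> Q r =
     (\<Union>q\<in>{q::int. 4 * \<mu> * Q \<le> real_of_int q \<and> real_of_int q \<le> 4 * Q \<and> 4 dvd q}.
        \<Union>a\<in>{a :: 'm \<Rightarrow> int. \<forall>j. 2 \<le> a j \<and> a j \<le> 2 * q \<and> 2 dvd a j}.
          {y :: real ^ 'm. (\<forall>j. 0 \<le> y $ j \<and> y $ j \<le> 2 * pi) \<and>
             (\<forall>j. \<bar>y $ j - 2 * pi * real_of_int (a j) / real_of_int q\<bar> < r)})"

lemma sets_rational_nbhd [measurable]: "(rational_nbhd \<mu> Q r :: (real^'m) set) \<in> sets lebesgue"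
proof -
  have "{y :: real ^ 'm. (\<forall>j. 0 \<le> y $ j \<and> y $ j \<le> 2 * pi) \<and>
             (\<forall>j. \<bar>y $ j - 2 * pi * real_of_int (a j) / real_of_int q\<bar> < r)}
      = cbox 0 (\<chi> j. 2 * pi) \<inter> cube (\<chi> j. 2 * pi * real_of_int (a j) / real_of_int q) r"
    for q :: int and a :: "'m \<Rightarrow> int"
    by (auto simp: cube_def mem_box_cart)
  then show ?thesis unfolding rational_nbhd_def
    by (intro sets.countable_UN' countableI_type image_subsetI) (auto intro: fmeasurableD)
qed

text \<open>The point \<open>pi b / p\<close> is \<open>2 pi a / q\<close> with \<open>q = 4 p\<close> and \<open>a = 2 b\<close>; the box is taken below it
  because \<open>pi b / p\<close> may lie on the face \<open>y\<^sub>j = 2 pi\<close>.\<close>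

lemma lower_box_subset_rational_nbhd:
  fixes \<mu> Q r s :: real
  assumes "1 \<le> p" "\<mu> * Q \<le> p" "p \<le> Q" "b \<in> numerators p"
    and "0 \<le> s" "s < pi" "s \<le> r"
  shows "box (rational_point p b - (\<chi> j. s)) (rational_point p b) \<subseteq> rational_nbhd \<mu> Q r"
proof
  fix y assume "y \<in> box (rational_point p b - (\<chi> j. s)) (rational_point p b)"
  then have y: "pi * b j / p - s < y$j \<and> y$j < pi * b j / p" for j
    by (simp add: mem_box_cart rational_point_def)
  have b: "int p \<le> b j \<and> b j \<le> 2 * int p" for j
    using assms(4) by (simp add: numerators_def PiE_UNIV_domain Pi_iff)
  have point: "pi \<le> pi * b j / p \<and> pi * b j / p \<le> 2 * pi" for j
  proof -
    have "real p \<le> b j" "b j \<le> 2 * real p" using b[of j] by linarith+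
    then show ?thesis using assms(1) by (simp add: field_simps)
  qed
  have q: "4 * int p \<in> {q::int. 4 * \<mu> * Q \<le> real_of_int q \<and> real_of_int q \<le> 4 * Q \<and> 4 dvd q}"
    using assms(2,3) by auto
  have "1 \<le> int p" using assms(1) by simp
  then have "2 \<le> 2 * b j \<and> 2 * b j \<le> 2 * (4 * int p)" for j
    using b[of j] by linarith
  then have a: "(\<lambda>j. 2 * b j) \<in> {a. \<forall>j. 2 \<le> a j \<and> a j \<le> 2 * (4 * int p) \<and> 2 dvd a j}"
    by simp
  have "0 \<le> y $ j \<and> y $ j \<le> 2 * pi" for j
    using y[of j] point[of j] assms(6) by linarith
  moreover have "\<bar>y $ j - 2 * pi * real_of_int (2 * b j) / real_of_int (4 * int p)\<bar> < r" for j
    using y[of j] assms(5,7) by (simp add: abs_less_iff)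
  ultimately have "y \<in> {y. (\<forall>j. 0 \<le> y $ j \<and> y $ j \<le> 2 * pi) \<and>
             (\<forall>j. \<bar>y $ j - 2 * pi * real_of_int (2 * b j) / real_of_int (4 * int p)\<bar> < r)}"
    by simp
  then show "y \<in> rational_nbhd \<mu> Q r"
    unfolding rational_nbhd_def by (intro UN_I[OF q] UN_I[OF a])
qed

lemma lower_box_of_rational_cube_subset_rational_nbhd:
  fixes \<mu> Q r c :: real and K p :: nat
  assumes "1 \<le> K" "1 \<le> p" "\<mu> * Q \<le> p" "p \<le> Q" "b \<in> numerators p"
    and "0 < \<mu>" "0 < Q" "0 \<le> c" "c < 2" "pi * c / (2 * \<mu> * Q * K) \<le> r"
  shows "box (rational_point p b - (\<chi> j. c / 2 * (pi / (p * K)))) (rational_point p b)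
           \<subseteq> rational_nbhd \<mu> Q r"
proof (rule lower_box_subset_rational_nbhd)
  have "c / 2 * (pi / (p * K)) = pi * c / (2 * p * K)" by (simp add: mult_ac)
  also have "\<dots> \<le> pi * c / (2 * \<mu> * Q * K)"
    using assms(1,3,6-8) by (intro frac_le mult_right_mono) auto
  finally show "c / 2 * (pi / (p * K)) \<le> r" using assms(10) by linarith
  have "1 \<le> real p * K" using mult_mono[of 1 "real p" 1 "real K"] assms(1,2) by simp
  then show "c / 2 * (pi / (p * K)) < pi"
    using assms(8,9) pi_gt_zero by (simp add: field_simps mult_less_le_imp_less)
  show "0 \<le> c / 2 * (pi / (p * K))" using assms(8) by simp
qed (use assms in auto)

lemma emeasure_rational_nbhd_ge:
  fixes \<mu> Q r c :: real and K N :: nat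
  assumes "1 \<le> K" "K ^ CARD('m) \<le> N" "N \<le> Q" "0 < \<mu>" "0 < Q" "0 \<le> c" "c < 2"
    and "pi * c / (2 * \<mu> * Q * K) \<le> r"
  shows "ennreal ((c / 12) ^ CARD('m) * (pi ^ CARD('m) - \<mu> * Q * (4 * pi / K) ^ CARD('m)))
           \<le> emeasure lebesgue (rational_nbhd \<mu> Q r :: (real^'m) set)"
proof -
  define G where "G = Sigma {p\<in>{1..N}. \<mu> * Q \<le> p} (numerators :: nat \<Rightarrow> ('m \<Rightarrow> int) set)"
  define ctr where "ctr i = rational_point (fst i) (snd i)" for i :: "nat \<times> ('m \<Rightarrow> int)"
  define R where "R i = pi / (fst i * K)" for i :: "nat \<times> ('m \<Rightarrow> int)"
  have "finite G" by (simp add: G_def)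
  have R_pos: "\<forall>i\<in>G. R i > 0" using assms(1) by (auto simp: G_def R_def)
  have boxes: "\<forall>i\<in>G. box (ctr i - (\<chi> j. c / 2 * R i)) (ctr i) \<subseteq> rational_nbhd \<mu> Q r"
  proof
    fix i assume "i \<in> G"
    then obtain p b where "i = (p, b)" "1 \<le> p" "p \<le> N" "\<mu> * Q \<le> p" "b \<in> numerators p"
      by (auto simp: G_def)
    then show "box (ctr i - (\<chi> j. c / 2 * R i)) (ctr i) \<subseteq> rational_nbhd \<mu> Q r"
      using lower_box_of_rational_cube_subset_rational_nbhd[of K p \<mu> Q b c r] assms
      by (simp add: ctr_def R_def)
  qed
  have "(\<Union>i\<in>G. cube (ctr i) (R i))
          = (\<Union>p\<in>{p\<in>{1..N}. \<mu> * Q \<le> p}. \<Union>b\<in>numerators p. rational_cube K p b)"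
    unfolding G_def ctr_def R_def rational_cube_def by (auto simp: Bex_def) blast
  moreover have "pi ^ CARD('m) - \<mu> * Q * (4 * pi / K) ^ CARD('m)
      \<le> measure lebesgue (\<Union>p\<in>{p\<in>{1..N}. \<mu> * Q \<le> p}. \<Union>b\<in>numerators p. rational_cube K p b :: (real^'m) set)"
    using assms(1,2,4,5) by (intro measure_large_denominator_cubes_ge) auto
  ultimately have "(c / 12) ^ CARD('m) * (pi ^ CARD('m) - \<mu> * Q * (4 * pi / K) ^ CARD('m))
      \<le> (c / 12) ^ CARD('m) * measure lebesgue (\<Union>i\<in>G. cube (ctr i) (R i))"
    using assms(6) by (intro mult_left_mono) auto
  then have "ennreal ((c / 12) ^ CARD('m) * (pi ^ CARD('m) - \<mu> * Q * (4 * pi / K) ^ CARD('m)))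
      \<le> ennreal ((c / 12) ^ CARD('m) * measure lebesgue (\<Union>i\<in>G. cube (ctr i) (R i)))"
    by (rule ennreal_leI)
  also have "\<dots> \<le> emeasure lebesgue (rational_nbhd \<mu> Q r :: (real^'m) set)"
    using emeasure_ge_of_lower_boxes[OF \<open>finite G\<close> R_pos _ _ boxes] assms(6,7) by simp
  finally show ?thesis .
qed

lemma nat_floor_root_bounds:
  fixes Q :: real and d :: nat
  assumes "1 \<le> Q" "1 \<le> d"
  obtains K :: nat
  where "1 \<le> K" "K ^ d \<le> nat \<lfloor>Q\<rfloor>" "Q powr (1 / d) \<le> 2 * real K" "Q \<le> (2 * real K) ^ d"
proof -
  define x where "x = Q powr (1 / d)"
  have "1 \<le> x" unfolding x_def using assms by (simp add: ge_one_powr_ge_zero)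
  have x_pow: "x ^ d = Q" unfolding x_def using assms
    by (simp add: powr_realpow[symmetric] powr_powr)
  define K where "K = nat \<lfloor>x\<rfloor>"
  have "real K = \<lfloor>x\<rfloor>" "1 \<le> \<lfloor>x\<rfloor>" using \<open>1 \<le> x\<close> by (simp_all add: K_def)
  then have "1 \<le> K" and K_le: "real K \<le> x" and le_K: "x \<le> 2 * real K"
    using floor_correct[of x] by linarith+
  have "real (K ^ d) \<le> Q"
    using x_pow K_le by (metis of_nat_0_le_iff of_nat_power power_mono)
  moreover have "x ^ d \<le> (2 * real K) ^ d"
    using \<open>1 \<le> x\<close> by (intro power_mono[OF le_K]) simp
  ultimately show thesis
    using \<open>1 \<le> K\<close> le_K x_pow by (intro that le_nat_floor) (simp_all add: x_def)
qed

lemma constant_le_volume_bound: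
  fixes \<mu> c :: real and d :: nat
  assumes "\<mu> \<le> (4 * pi) powi (- int (d + 1))" "0 \<le> c"
  shows "c ^ d * 3 powi (- int d) * 2 powi (- int (d + 1)) \<le> (c / 12) ^ d * (pi ^ d - \<mu> * (8 * pi) ^ d)"
proof -
  have pow_8pi: "(8 * pi) ^ d = 2 ^ d * (4 * pi) ^ d"
    unfolding power_mult_distrib[symmetric] by simp
  have pow_4pi: "(4 * pi) ^ (d + 1) = (4 * pi) ^ d * (4 * pi)"
    by (rule power_Suc2[of _ d, unfolded Suc_eq_plus1])
  have cancel: "inverse (X * a) * (b * X) = b / a" if "X \<noteq> 0" for X a b :: real
    using that by (simp add: field_simps)
  have "\<mu> * (8 * pi) ^ d \<le> inverse ((4 * pi) ^ (d + 1)) * (8 * pi) ^ d"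
    using assms(1) by (intro mult_right_mono) (simp_all only: power_int_minus power_int_of_nat, simp)
  also have "\<dots> = 2 ^ d / (4 * pi)"
    unfolding pow_8pi pow_4pi by (rule cancel) simp
  also have "\<dots> \<le> 2 ^ d / 2"
    using pi_ge_two by (intro divide_left_mono) auto
  finally have bound: "2 ^ d / 2 \<le> pi ^ d - \<mu> * (8 * pi) ^ d"
    using power_mono[OF pi_ge_two, of d] by simp
  have lhs: "c ^ d * 3 powi (- int d) * 2 powi (- int (d + 1)) = (c / 12) ^ d * (2 ^ d / 2)"
  proof -
    have "(12::real) ^ d = 3 ^ d * 2 ^ d * 2 ^ d"
      unfolding power_mult_distrib[symmetric] by simp
    moreover have "(2::real) ^ (d + 1) = 2 ^ d * 2"
      by (rule power_Suc2[of _ d, unfolded Suc_eq_plus1])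
    ultimately show ?thesis
      by (simp only: power_int_minus power_int_of_nat power_divide) (simp add: field_simps)
  qed
  show ?thesis
    unfolding lhs using bound assms(2) by (intro mult_left_mono) auto
qed

lemma emeasure_rational_nbhd_ge_root:
  fixes \<mu> Q c :: real
  assumes "1 \<le> Q" "0 < \<mu>" "0 \<le> c" "c < 2"
  shows "ennreal ((c / 12) ^ CARD('m) * (pi ^ CARD('m) - \<mu> * (8 * pi) ^ CARD('m)))
      \<le> emeasure lebesgue (rational_nbhd \<mu> Q (pi * c / ((\<mu> * Q) * Q powr (1 / CARD('m)))) :: (real^'m) set)"
proof -
  define d where "d = CARD('m)"
  obtain K :: nat
    where K: "1 \<le> K" "K ^ d \<le> nat \<lfloor>Q\<rfloor>" "Q powr (1 / d) \<le> 2 * real K" "Q \<le> (2 * real K) ^ d"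
    using nat_floor_root_bounds[OF \<open>1 \<le> Q\<close>, of d] by (auto simp: d_def)
  have "(\<mu> * Q) * Q powr (1 / d) \<le> (\<mu> * Q) * (2 * K)"
    using K(3) assms(1,2) by (intro mult_left_mono) auto
  then have "pi * c / ((\<mu> * Q) * (2 * K)) \<le> pi * c / ((\<mu> * Q) * Q powr (1 / d))"
    using assms by (intro frac_le) auto
  then have radius: "pi * c / (2 * \<mu> * Q * K) \<le> pi * c / ((\<mu> * Q) * Q powr (1 / d))"
    by (simp add: mult_ac)
  have "Q * (4 * pi / K) ^ d \<le> (2 * real K) ^ d * (4 * pi / K) ^ d"
    using K(4) by (intro mult_right_mono) auto
  also have "\<dots> = (2 * real K * (4 * pi / K)) ^ d"
    by (rule power_mult_distrib[symmetric])
  also have "\<dots> = (8 * pi) ^ d"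
    using K(1) by simp
  finally have "(c / 12) ^ d * (pi ^ d - \<mu> * (8 * pi) ^ d) \<le> (c / 12) ^ d * (pi ^ d - \<mu> * Q * (4 * pi / K) ^ d)"
    using assms(2,3) by (intro mult_left_mono) (auto simp: mult.assoc)
  then have "ennreal ((c / 12) ^ d * (pi ^ d - \<mu> * (8 * pi) ^ d))
      \<le> ennreal ((c / 12) ^ d * (pi ^ d - \<mu> * Q * (4 * pi / K) ^ d))"
    by (rule ennreal_leI)
  also have "\<dots> \<le> emeasure lebesgue (rational_nbhd \<mu> Q (pi * c / ((\<mu> * Q) * Q powr (1 / d))) :: (real^'m) set)"
    using K(1,2) radius assms unfolding d_def by (intro emeasure_rational_nbhd_ge) auto
  finally show ?thesis by (simp add: d_def)
qed

text \<open>The hypothesis \<open>n \<ge> 2\<close> is automatic, since \<open>CARD('m) \<ge> 1\<close>.\<close>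

theorem mainTheorem9:
  fixes n :: nat and Q \<mu>0 c4 :: real
  assumes hn: "n = CARD('m::finite) + 1"
    and "n \<ge> 2" and "Q \<ge> 1"
    and "0 < \<mu>0" and "\<mu>0 \<le> (4 * pi) powi (- int n)"
    and "0 < c4" and "c4 < 1"
  shows "emeasure lebesgue
     (\<Union>q\<in>{q::int. 4 * \<mu>0 * Q \<le> real_of_int q \<and> real_of_int q \<le> 4 * Q \<and> 4 dvd q}.
        \<Union>a\<in>{a :: 'm \<Rightarrow> int. \<forall>j. 2 \<le> a j \<and> a j \<le> 2 * q \<and> 2 dvd a j}.
          {y :: real ^ 'm. (\<forall>j. 0 \<le> y $ j \<and> y $ j \<le> 2 * pi) \<and>
             (\<forall>j. \<bar>y $ j - 2 * pi * real_of_int (a j) / real_of_int q\<bar>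
                  < pi * c4 / ((\<mu>0 * Q) * Q powr (1 / real (n - 1))))})
   \<ge> ennreal (c4 ^ (n - 1) * 3 powi (- int (n - 1)) * 2 powi (- int n))"
proof -
  have n: "n = CARD('m) + 1" "n - 1 = CARD('m)" using hn by simp_all
  have "ennreal (c4 ^ (n - 1) * 3 powi (- int (n - 1)) * 2 powi (- int n))
      \<le> ennreal ((c4 / 12) ^ CARD('m) * (pi ^ CARD('m) - \<mu>0 * (8 * pi) ^ CARD('m)))"
    using constant_le_volume_bound[of \<mu>0 "CARD('m)" c4] assms(5,6) n by (intro ennreal_leI) simp
  also have "\<dots> \<le> emeasure lebesgue
      (rational_nbhd \<mu>0 Q (pi * c4 / ((\<mu>0 * Q) * Q powr (1 / real (n - 1)))) :: (real^'m) set)"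
    using emeasure_rational_nbhd_ge_root[of Q \<mu>0 c4] assms(3,4,6,7) n(2) by simp
  finally show ?thesis unfolding rational_nbhd_def .
qed

end
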